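(* Let the problem, the cone $\mathcal{C}$ and the algorithm $\widetilde A$ be as in the context. Then: - $\widetilde A\in\mathcal{A}(\mathcal{C})$. - For every $f\in\mathcal{C}$ and $\varepsilon>0$, $\mathrm{cost}(\widetilde A,f,\varepsilon)=n_{j^*}$, where $j^*=\min\{j\in\mathbb{N}:\sigma_j(f)\le\varepsilon\sqrt{1-b^2}/(ab)\}$. - For all $\varepsilon,\rho>0$, $\mathrm{cost}(\widetilde A,\mathcal{C},\varepsilon,\rho)\le n_{j^\dagger}$ for some positive integer $j^\dagger$ satisfying $$j^\dagger\le\min\Big\{j\in\mathbb{N}:\frac{\rho^2}{\varepsilon^2}\le\frac{1-b^2}{a^2b^2}\Big[\sum_{k=1}^{j-1}\frac{b^{2(k-j)}}{a^2\lambda_{n_{k-1}+1}^2}+\frac{1}{\lambda_{n_{j-1}+1}^2}\Big]\Big\}.$$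
   Context: Let $\mathcal{F}$ and $\mathcal{G}$ be separable Hilbert spaces with orthonormal bases $(u_i)_{i\in\mathbb{N}}$ and $(v_i)_{i\in\mathbb{N}}$. Write $f=\sum_i\widehat f_iu_i$ with $\|f\|_{\mathcal{F}}=\|(\widehat f_i)_i\|_{\ell^2}$, and similarly for $\mathcal{G}$. Let $S:\mathcal{F}\to\mathcal{G}$ be the linear operator $S(f)=\sum_i\lambda_i\widehat f_iv_i$, where $\lambda_1\ge\lambda_2\ge\cdots>0$ and $\lambda_i\to0$. For $n\ge0$ let $A_n(f)=\sum_{i=1}^n\lambda_i\widehat f_iv_i$; it uses the $n$ values $\widehat f_1,\dots,\widehat f_n$. Let $\mathcal{B}_\rho=\{f:\|f\|_{\mathcal{F}}\le\rho\}$. For $\mathcal{H}\subseteq\mathcal{F}$, $\mathcal{A}(\mathcal{H})$ is the set of deterministic algorithms $A:\mathcal{H}\times(0,\infty)\to\mathcal{G}$, adaptively sampling finitely many bounded linear functionals of the input, with $\|S(f)-A(f,\varepsilon)\|_{\mathcal{G}}\le\varepsilon$ for all $f\in\mathcal{H}$ and all $\varepsilon>0$. $\mathrm{cost}(A,f,\varepsilon)$ is the number of linear functional values used to compute $A(f,\varepsilon)$, and $\mathrm{cost}(A,\mathcal{H},\varepsilon,\rho)=\sup\{\mathrm{cost}(A,f,\varepsilon):f\in\mathcal{H}\cap\mathcal{B}_\rho\}$. Let $n_0<n_1<n_2<\cdots$ be a strictly increasing, unbounded sequence of non-negative integers. For $j\in\mathbb{N}=\{1,2,\dots\}$ let $\sigma_j(f)=\|(\lambda_i\widehat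 f_i)_{i=n_{j-1}+1}^{n_j}\|_{\ell^2}$. Fix constants $0<b<1<a$ and define the cone $$\mathcal{C}=\{f\in\mathcal{F}:\sigma_{j+r}(f)\le ab^r\sigma_j(f)\ \forall j,r\in\mathbb{N}\}.$$ The algorithm $\widetilde A$ works as follows. Given $f\in\mathcal{C}$ and $\varepsilon>0$, for $j=1,2,\dots$ it computes $\sigma_j(f)$. At the first $j$ with $\sigma_j(f)\le\varepsilon\sqrt{1-b^2}/(ab)$, it returns $\widetilde A(f,\varepsilon)=A_{n_j}(f)$. *)

theory Defs
  imports "HOL-Analysis.Analysis"
begin

text \<open>Coordinates: an element f of the Hilbert space F is represented by its coefficient
sequence, 0-based: f i is the coefficient of u_(i+1); likewise lam i = lambda_(i+1).
Elements of G are represented by their coefficient sequences w.r.t. (v_i).\<close>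

definition inF :: "(nat \<Rightarrow> real) \<Rightarrow> bool" where
  "inF f \<longleftrightarrow> summable (\<lambda>i. (f i)\<^sup>2)"

definition l2norm :: "(nat \<Rightarrow> real) \<Rightarrow> real" where
  "l2norm f = sqrt (\<Sum>i. (f i)\<^sup>2)"

definition Sop :: "(nat \<Rightarrow> real) \<Rightarrow> (nat \<Rightarrow> real) \<Rightarrow> (nat \<Rightarrow> real)" where
  "Sop lam f = (\<lambda>i. lam i * f i)"

definition Atrunc :: "(nat \<Rightarrow> real) \<Rightarrow> nat \<Rightarrow> (nat \<Rightarrow> real) \<Rightarrow> (nat \<Rightarrow> real)" where
  "Atrunc lam m f = (\<lambda>i. if i < m then lam i * f i else 0)"

text \<open>sigma_j(f) = norm of (lambda_i f_i) for i = n_(j-1)+1 .. n_j (1-based), for j \<ge> 1.\<close>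
definition sigma :: "(nat \<Rightarrow> real) \<Rightarrow> (nat \<Rightarrow> nat) \<Rightarrow> (nat \<Rightarrow> real) \<Rightarrow> nat \<Rightarrow> real" where
  "sigma lam n f j = sqrt (\<Sum>i\<in>{n (j - 1)..<n j}. (lam i * f i)\<^sup>2)"

definition cone :: "(nat \<Rightarrow> real) \<Rightarrow> (nat \<Rightarrow> nat) \<Rightarrow> real \<Rightarrow> real \<Rightarrow> (nat \<Rightarrow> real) set" where
  "cone lam n a b = {f. inF f \<and>
      (\<forall>j\<ge>1. \<forall>r\<ge>1. sigma lam n f (j + r) \<le> a * b ^ r * sigma lam n f j)}"

definition thr :: "real \<Rightarrow> real \<Rightarrow> real \<Rightarrow> real" where
  "thr a b \<epsilon> = \<epsilon> * sqrt (1 - b\<^sup>2) / (a * b)"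

definition jstop :: "(nat \<Rightarrow> real) \<Rightarrow> (nat \<Rightarrow> nat) \<Rightarrow> real \<Rightarrow> real \<Rightarrow> (nat \<Rightarrow> real) \<Rightarrow> real \<Rightarrow> nat" where
  "jstop lam n a b f \<epsilon> = (LEAST j. j \<ge> 1 \<and> sigma lam n f j \<le> thr a b \<epsilon>)"

definition Atilde :: "(nat \<Rightarrow> real) \<Rightarrow> (nat \<Rightarrow> nat) \<Rightarrow> real \<Rightarrow> real \<Rightarrow> (nat \<Rightarrow> real) \<Rightarrow> real \<Rightarrow> (nat \<Rightarrow> real)" where
  "Atilde lam n a b f \<epsilon> = Atrunc lam (n (jstop lam n a b f \<epsilon>)) f"

text \<open>Indices (0-based) of the coefficients f_i sampled by A-tilde: computing
sigma_1,...,sigma_(j) and A_(n_j) uses exactly the coefficients 1..n_j, j = stopping index.\<close>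
definition sampled_Atilde :: "(nat \<Rightarrow> real) \<Rightarrow> (nat \<Rightarrow> nat) \<Rightarrow> real \<Rightarrow> real \<Rightarrow> (nat \<Rightarrow> real) \<Rightarrow> real \<Rightarrow> nat set" where
  "sampled_Atilde lam n a b f \<epsilon> =
     {i. i < n 0} \<union> (\<Union>j\<in>{1..jstop lam n a b f \<epsilon>}. {n (j - 1)..<n j})"

definition cost_Atilde :: "(nat \<Rightarrow> real) \<Rightarrow> (nat \<Rightarrow> nat) \<Rightarrow> real \<Rightarrow> real \<Rightarrow> (nat \<Rightarrow> real) \<Rightarrow> real \<Rightarrow> nat" where
  "cost_Atilde lam n a b f \<epsilon> = card (sampled_Atilde lam n a b f \<epsilon>)"

text \<open>The bracketed condition defining the bound on j-dagger (1-based k, j; 0-based lam).\<close>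
definition jdag_cond :: "(nat \<Rightarrow> real) \<Rightarrow> (nat \<Rightarrow> nat) \<Rightarrow> real \<Rightarrow> real \<Rightarrow> real \<Rightarrow> real \<Rightarrow> nat \<Rightarrow> bool" where
  "jdag_cond lam n a b \<epsilon> \<rho> j \<longleftrightarrow>
     \<rho>\<^sup>2 / \<epsilon>\<^sup>2 \<le> (1 - b\<^sup>2) / (a\<^sup>2 * b\<^sup>2) *
       ((\<Sum>k\<in>{1..<j}. b powi (2 * (int k - int j)) / (a\<^sup>2 * (lam (n (k - 1)))\<^sup>2))
        + 1 / (lam (n (j - 1)))\<^sup>2)"

end

theory Submission
  imports Defs
begin

text \<open>The cone condition bounds every later block norm sigma(J+r) by a b^r sigma(J), so the
truncation error of A_n(J) is at most a b sigma(J) / sqrt(1 - b^2), which is at most \<epsilon> once sigma(J)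
is below the threshold T = \<epsilon> sqrt(1 - b^2) / (a b).  Read backwards, the condition says that while
sigma(j) > T, every earlier sigma(k) exceeds T b^(k-j) / a.  Since \<lambda> decreases, sigma(k) divided by
the first weight of block k is at most the norm of f on that block; summing over k \<le> j gives
\<rho>^2 > T^2 times the bracket in the bound on j-dagger.  So the algorithm has stopped by every j
satisfying that bound.\<close>

lemma sum_over_blocks:
  fixes h :: "nat \<Rightarrow> 'a::comm_monoid_add" and n :: "nat \<Rightarrow> nat"
  assumes "mono n"
  shows "sum h {n m..<n (m + R)} = (\<Sum>r=1..R. sum h {n (m + r - 1)..<n (m + r)})"
proof (induction R)
  case 0
  then show ?case by simp
next
  case (Suc R)
  have "n m \<le> n (m + R)" "n (m + R) \<le> n (m + Suc R)"
    using assms by (auto intro: monoD)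
  then have "sum h {n m..<n (m + Suc R)} = sum h {n m..<n (m + R)} + sum h {n (m + R)..<n (m + Suc R)}"
    by (simp only: sum.atLeastLessThan_concat)
  with Suc show ?case by (simp add: atLeastAtMostSuc_conv add.commute)
qed

lemma lessThan_Union_blocks:
  fixes n :: "nat \<Rightarrow> nat"
  assumes "mono n"
  shows "{i. i < n 0} \<union> (\<Union>j\<in>{1..J}. {n (j - 1)..<n j}) = {..<n J}"
proof (induction J)
  case 0
  then show ?case by auto
next
  case (Suc J)
  have "n J \<le> n (Suc J)" using assms by (auto intro: monoD)
  then have "{..<n J} \<union> {n J..<n (Suc J)} = {..<n (Suc J)}" by auto
  with Suc show ?case by (simp add: atLeastAtMostSuc_conv) blast
qed

lemma sum_power_from_1_le:
  fixes q :: real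
  assumes "0 \<le> q" "q < 1"
  shows "(\<Sum>r=1..R. q ^ r) \<le> q / (1 - q)"
  using assms by (auto simp: sum_gp intro: divide_right_mono)

lemma suminf_sq_le_if_l2norm_le:
  assumes "inF f" and "l2norm f \<le> \<rho>"
  shows "(\<Sum>i. (f i)\<^sup>2) \<le> \<rho>\<^sup>2"
  using assms unfolding inF_def l2norm_def by (simp add: sqrt_le_D)

lemma l2norm_le:
  assumes "summable (\<lambda>i. (g i)\<^sup>2)" and "0 \<le> c" and "\<And>N. (\<Sum>i<N. (g i)\<^sup>2) \<le> c\<^sup>2"
  shows "l2norm g \<le> c"
proof -
  have "sqrt (\<Sum>i. (g i)\<^sup>2) \<le> sqrt (c\<^sup>2)"
    using suminf_le_const[OF assms(1,3)] by (rule real_sqrt_le_mono)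
  with \<open>0 \<le> c\<close> show ?thesis unfolding l2norm_def by simp
qed

lemma summable_weighted_sq:
  fixes lam f :: "nat \<Rightarrow> real"
  assumes "\<forall>i. lam i > 0" and "decseq lam" and "inF f"
  shows "summable (\<lambda>i. (lam i * f i)\<^sup>2)"
proof (rule summable_comparison_test)
  show "summable (\<lambda>i. (lam 0)\<^sup>2 * (f i)\<^sup>2)"
    using \<open>inF f\<close> unfolding inF_def by (rule summable_mult)
  have "(lam i)\<^sup>2 \<le> (lam 0)\<^sup>2" for i
    using assms(1,2) by (simp add: decseqD less_imp_le power_mono)
  then show "\<exists>N. \<forall>i\<ge>N. norm ((lam i * f i)\<^sup>2) \<le> (lam 0)\<^sup>2 * (f i)\<^sup>2"
    by (auto simp: power_mult_distrib intro!: mult_right_mono)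
qed

lemma sigma_nonneg: "0 \<le> sigma lam n f j"
  unfolding sigma_def by (simp add: sum_nonneg)

lemma sigma_sq: "(sigma lam n f j)\<^sup>2 = (\<Sum>i\<in>{n (j - 1)..<n j}. (lam i * f i)\<^sup>2)"
  unfolding sigma_def by (simp add: sum_nonneg)

lemma sum_sigma_sq:
  assumes "mono n"
  shows "(\<Sum>j=1..J. (sigma lam n f j)\<^sup>2) = (\<Sum>i\<in>{n 0..<n J}. (lam i * f i)\<^sup>2)"
  using sum_over_blocks[OF assms, of "\<lambda>i. (lam i * f i)\<^sup>2" 0 J] by (simp add: sigma_sq)

lemma sum_sigma_sq_div_le:
  fixes lam f :: "nat \<Rightarrow> real" and n :: "nat \<Rightarrow> nat"
  assumes lam_pos: "\<forall>i. lam i > 0" and lam_dec: "decseq lam" and "mono n"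
  shows "(\<Sum>k=1..j. (sigma lam n f k)\<^sup>2 / (lam (n (k - 1)))\<^sup>2) \<le> (\<Sum>i\<in>{n 0..<n j}. (f i)\<^sup>2)"
proof -
  have "(sigma lam n f k)\<^sup>2 / (lam (n (k - 1)))\<^sup>2 \<le> (\<Sum>i\<in>{n (k - 1)..<n k}. (f i)\<^sup>2)" for k
  proof -
    have "(lam i * f i)\<^sup>2 / (lam (n (k - 1)))\<^sup>2 \<le> (f i)\<^sup>2" if "n (k - 1) \<le> i" for i
    proof -
      have "(lam i)\<^sup>2 \<le> (lam (n (k - 1)))\<^sup>2"
        using that lam_pos lam_dec by (simp add: decseqD less_imp_le power_mono)
      then have "(f i)\<^sup>2 * (lam i)\<^sup>2 \<le> (f i)\<^sup>2 * (lam (n (k - 1)))\<^sup>2"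
        by (rule mult_left_mono) simp
      then have "(lam i * f i)\<^sup>2 \<le> (f i)\<^sup>2 * (lam (n (k - 1)))\<^sup>2"
        by (simp add: power_mult_distrib mult.commute)
      moreover have "0 < (lam (n (k - 1)))\<^sup>2" using lam_pos[rule_format, of "n (k - 1)"] by simp
      ultimately show ?thesis by (simp add: pos_divide_le_eq)
    qed
    then show ?thesis
      unfolding sigma_sq sum_divide_distrib by (intro sum_mono) simp
  qed
  then have "(\<Sum>k=1..j. (sigma lam n f k)\<^sup>2 / (lam (n (k - 1)))\<^sup>2)
      \<le> (\<Sum>k=1..j. \<Sum>i\<in>{n (k - 1)..<n k}. (f i)\<^sup>2)"
    by (rule sum_mono)
  also have "\<dots> = (\<Sum>i\<in>{n 0..<n j}. (f i)\<^sup>2)"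
    using sum_over_blocks[OF \<open>mono n\<close>, of "\<lambda>i. (f i)\<^sup>2" 0 j] by simp
  finally show ?thesis .
qed

lemma exists_sigma_le:
  fixes lam f :: "nat \<Rightarrow> real" and n :: "nat \<Rightarrow> nat"
  assumes "\<forall>i. lam i > 0" and "decseq lam" and "mono n" and "inF f" and "t > 0"
  shows "\<exists>j\<ge>1. sigma lam n f j \<le> t"
proof (rule ccontr)
  assume "\<not> ?thesis"
  then have t_less: "t\<^sup>2 < (sigma lam n f j)\<^sup>2" if "j \<ge> 1" for j
    using that \<open>t > 0\<close> by (force intro: power_strict_mono)
  define g where "g i = (lam i * f i)\<^sup>2" for i
  have "summable g"
    unfolding g_def using summable_weighted_sq[OF assms(1,2,4)] .
  obtain J :: nat where J: "suminf g / t\<^sup>2 < J"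
    using reals_Archimedean2 by blast
  have "real J * t\<^sup>2 = (\<Sum>j=1..J. t\<^sup>2)" by simp
  also have "\<dots> \<le> (\<Sum>j=1..J. (sigma lam n f j)\<^sup>2)"
    using t_less by (intro sum_mono less_imp_le) simp
  also have "\<dots> = sum g {n 0..<n J}"
    unfolding sum_sigma_sq[OF \<open>mono n\<close>] g_def ..
  also have "\<dots> \<le> suminf g"
    using \<open>summable g\<close> by (rule sum_le_suminf) (auto simp: g_def)
  finally show False
    using J \<open>t > 0\<close> by (simp add: field_simps)
qed

lemma thr_pos:
  assumes "0 < b" "b < 1" "1 < a" "0 < \<epsilon>"
  shows "0 < thr a b \<epsilon>"
  using assms unfolding thr_def by (simp add: power_less_one_iff)

lemma thr_sq:
  assumes "0 < b" "b < 1"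
  shows "(thr a b \<epsilon>)\<^sup>2 = \<epsilon>\<^sup>2 * (1 - b\<^sup>2) / (a\<^sup>2 * b\<^sup>2)"
proof -
  have "b\<^sup>2 < 1" using assms by (simp add: power_less_one_iff)
  then show ?thesis unfolding thr_def by (simp add: power_divide power_mult_distrib)
qed

lemma jstop_spec:
  assumes "\<exists>j\<ge>1. sigma lam n f j \<le> thr a b \<epsilon>"
  shows "1 \<le> jstop lam n a b f \<epsilon> \<and> sigma lam n f (jstop lam n a b f \<epsilon>) \<le> thr a b \<epsilon>"
  using LeastI_ex[of "\<lambda>j. 1 \<le> j \<and> sigma lam n f j \<le> thr a b \<epsilon>"] assms
  unfolding jstop_def by blast

lemma jstop_le: "1 \<le> j \<Longrightarrow> sigma lam n f j \<le> thr a b \<epsilon> \<Longrightarrow> jstop lam n a b f \<epsilon> \<le> j"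
  unfolding jstop_def by (rule Least_le) simp

lemma cost_Atilde_eq: "mono n \<Longrightarrow> cost_Atilde lam n a b f \<epsilon> = n (jstop lam n a b f \<epsilon>)"
  unfolding cost_Atilde_def sampled_Atilde_def by (subst lessThan_Union_blocks) simp_all

lemma coneD:
  assumes "f \<in> cone lam n a b"
  shows "inF f" and "\<And>j r. 1 \<le> j \<Longrightarrow> 1 \<le> r \<Longrightarrow> sigma lam n f (j + r) \<le> a * b ^ r * sigma lam n f j"
  using assms unfolding cone_def by auto

lemma cone_tail_le:
  assumes "f \<in> cone lam n a b" and "mono n" and "1 \<le> J" and "0 < b" and "b < 1"
  shows "(\<Sum>i\<in>{n J..<n (J + N)}. (lam i * f i)\<^sup>2) \<le> (a * sigma lam n f J)\<^sup>2 * (b\<^sup>2 / (1 - b\<^sup>2))"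
proof -
  have "(\<Sum>i\<in>{n J..<n (J + N)}. (lam i * f i)\<^sup>2) = (\<Sum>r=1..N. (sigma lam n f (J + r))\<^sup>2)"
    unfolding sum_over_blocks[OF \<open>mono n\<close>] sigma_sq by simp
  also have "\<dots> \<le> (\<Sum>r=1..N. (a * sigma lam n f J)\<^sup>2 * (b\<^sup>2) ^ r)"
  proof (rule sum_mono)
    fix r :: nat assume "r \<in> {1..N}"
    then have "sigma lam n f (J + r) \<le> a * b ^ r * sigma lam n f J"
      using coneD(2)[OF assms(1,3)] by simp
    then have "(sigma lam n f (J + r))\<^sup>2 \<le> (a * b ^ r * sigma lam n f J)\<^sup>2"
      by (simp add: power_mono sigma_nonneg)
    then show "(sigma lam n f (J + r))\<^sup>2 \<le> (a * sigma lam n f J)\<^sup>2 * (b\<^sup>2) ^ r"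
      by (simp add: power_mult_distrib power_mult[symmetric] mult_ac)
  qed
  also have "\<dots> = (a * sigma lam n f J)\<^sup>2 * (\<Sum>r=1..N. (b\<^sup>2) ^ r)"
    by (simp add: sum_distrib_left)
  also have "\<dots> \<le> (a * sigma lam n f J)\<^sup>2 * (b\<^sup>2 / (1 - b\<^sup>2))"
    using assms(4,5) by (intro mult_left_mono sum_power_from_1_le) (auto simp: power_less_one_iff)
  finally show ?thesis .
qed

lemma cone_sigma_lower:
  assumes "f \<in> cone lam n a b" and "0 < b" and "a \<noteq> 0" and "1 \<le> k" and "k < j"
  shows "(sigma lam n f j)\<^sup>2 * (b powi (2 * (int k - int j)) / a\<^sup>2) \<le> (sigma lam n f k)\<^sup>2"
proof -
  define m where "m = j - k"
  have "1 \<le> m" and j: "j = k + m" using assms(5) unfolding m_def by auto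
  have "sigma lam n f j \<le> a * b ^ m * sigma lam n f k"
    using coneD(2)[OF assms(1,4) \<open>1 \<le> m\<close>] j by simp
  then have "(sigma lam n f j)\<^sup>2 \<le> (a * b ^ m * sigma lam n f k)\<^sup>2"
    by (simp add: power_mono sigma_nonneg)
  also have "\<dots> = a\<^sup>2 * b ^ (2 * m) * (sigma lam n f k)\<^sup>2"
    by (simp add: power_mult_distrib power_mult[symmetric] mult.commute)
  finally have "(sigma lam n f j)\<^sup>2 / (a\<^sup>2 * b ^ (2 * m)) \<le> (sigma lam n f k)\<^sup>2"
    using assms(2,3) by (simp add: divide_le_eq mult.commute)
  moreover have "b powi (2 * (int k - int j)) = inverse (b ^ (2 * m))"
  proof -
    have "2 * (int k - int j) = - int (2 * m)" using j by simp
    then show ?thesis by (simp only: power_int_minus power_int_of_nat)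
  qed
  ultimately show ?thesis
    by (simp add: divide_inverse mult_ac)
qed

lemma truncation_error_le:
  fixes lam f :: "nat \<Rightarrow> real" and n :: "nat \<Rightarrow> nat"
  assumes lam_pos: "\<forall>i. lam i > 0" and lam_dec: "decseq lam" and n_mono: "strict_mono n"
    and f: "f \<in> cone lam n a b" and J: "1 \<le> J" and b_pos: "0 < b" and b_lt1: "b < 1" and "0 \<le> a"
  shows "l2norm (\<lambda>i. Sop lam f i - Atrunc lam (n J) f i) \<le> a * b * sigma lam n f J / sqrt (1 - b\<^sup>2)"
proof (rule l2norm_le)
  define g where "g i = (lam i * f i)\<^sup>2" for i
  have err: "(Sop lam f i - Atrunc lam (n J) f i)\<^sup>2 = (if i < n J then 0 else g i)" for i
    unfolding Sop_def Atrunc_def g_def by simp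
  show "summable (\<lambda>i. (Sop lam f i - Atrunc lam (n J) f i)\<^sup>2)"
    unfolding err
    by (rule summable_comparison_test[OF _ summable_weighted_sq[OF lam_pos lam_dec coneD(1)[OF f]]])
      (auto simp: g_def)
  have "b\<^sup>2 < 1" using b_pos b_lt1 by (simp add: power_less_one_iff)
  then show "0 \<le> a * b * sigma lam n f J / sqrt (1 - b\<^sup>2)"
    using \<open>0 \<le> a\<close> b_pos by (simp add: sigma_nonneg)
  fix N
  have "N \<le> n (J + N)"
    using seq_suble[OF n_mono, of "J + N"] by simp
  then have "(\<Sum>i<N. (Sop lam f i - Atrunc lam (n J) f i)\<^sup>2) \<le> (\<Sum>i<n (J + N). if i < n J then 0 else g i)"
    unfolding err by (intro sum_mono2) (auto simp: g_def)
  also have "\<dots> = sum g {n J..<n (J + N)}"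
  proof -
    have "{..<n (J + N)} \<inter> - {i. i < n J} = {n J..<n (J + N)}" by auto
    then show ?thesis by (simp add: sum.If_cases)
  qed
  also have "\<dots> \<le> (a * sigma lam n f J)\<^sup>2 * (b\<^sup>2 / (1 - b\<^sup>2))"
    unfolding g_def using cone_tail_le[OF f strict_mono_mono[OF n_mono] J b_pos b_lt1] .
  also have "\<dots> = (a * b * sigma lam n f J / sqrt (1 - b\<^sup>2))\<^sup>2"
    using \<open>b\<^sup>2 < 1\<close> by (simp add: power_divide power_mult_distrib)
  finally show "(\<Sum>i<N. (Sop lam f i - Atrunc lam (n J) f i)\<^sup>2) \<le> (a * b * sigma lam n f J / sqrt (1 - b\<^sup>2))\<^sup>2" .
qed

lemma Atilde_error_le:
  fixes lam f :: "nat \<Rightarrow> real" and n :: "nat \<Rightarrow> nat"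
  assumes lam_pos: "\<forall>i. lam i > 0" and lam_dec: "decseq lam" and n_mono: "strict_mono n"
    and b_pos: "0 < b" and b_lt1: "b < 1" and a_gt1: "1 < a"
    and f: "f \<in> cone lam n a b" and e: "0 < \<epsilon>"
  shows "l2norm (\<lambda>i. Sop lam f i - Atilde lam n a b f \<epsilon> i) \<le> \<epsilon>"
proof -
  define J where "J = jstop lam n a b f \<epsilon>"
  have "\<exists>j\<ge>1. sigma lam n f j \<le> thr a b \<epsilon>"
    using exists_sigma_le[OF lam_pos lam_dec strict_mono_mono[OF n_mono] coneD(1)[OF f]
        thr_pos[OF b_pos b_lt1 a_gt1 e]] .
  then have "1 \<le> J" and sigma_J: "sigma lam n f J \<le> thr a b \<epsilon>"
    using jstop_spec unfolding J_def by blast+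
  have "b\<^sup>2 < 1" using b_pos b_lt1 by (simp add: power_less_one_iff)
  have "l2norm (\<lambda>i. Sop lam f i - Atilde lam n a b f \<epsilon> i) \<le> a * b * sigma lam n f J / sqrt (1 - b\<^sup>2)"
    unfolding Atilde_def J_def[symmetric] using a_gt1
    by (intro truncation_error_le[OF lam_pos lam_dec n_mono f \<open>1 \<le> J\<close> b_pos b_lt1]) simp
  also have "\<dots> \<le> a * b * thr a b \<epsilon> / sqrt (1 - b\<^sup>2)"
    using sigma_J a_gt1 b_pos \<open>b\<^sup>2 < 1\<close> by (intro divide_right_mono mult_left_mono) simp_all
  also have "\<dots> = \<epsilon>"
    using a_gt1 b_pos \<open>b\<^sup>2 < 1\<close> unfolding thr_def by simp
  finally show ?thesis .
qed

definition jdag_bracket :: "(nat \<Rightarrow> real) \<Rightarrow> (nat \<Rightarrow> nat) \<Rightarrow> real \<Rightarrow> real \<Rightarrow> nat \<Rightarrow> real" where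
  "jdag_bracket lam n a b j =
     (\<Sum>k\<in>{1..<j}. b powi (2 * (int k - int j)) / (a\<^sup>2 * (lam (n (k - 1)))\<^sup>2)) + 1 / (lam (n (j - 1)))\<^sup>2"

lemma jdag_cond_iff:
  "jdag_cond lam n a b \<epsilon> \<rho> j \<longleftrightarrow> \<rho>\<^sup>2 / \<epsilon>\<^sup>2 \<le> (1 - b\<^sup>2) / (a\<^sup>2 * b\<^sup>2) * jdag_bracket lam n a b j"
  unfolding jdag_cond_def jdag_bracket_def ..

lemma jdag_bracket_ge:
  assumes "0 < b"
  shows "1 / (lam (n (j - 1)))\<^sup>2 \<le> jdag_bracket lam n a b j"
  unfolding jdag_bracket_def using assms
  by (simp add: sum_nonneg divide_nonneg_nonneg zero_le_power_int)

lemma sq_mult_jdag_bracket_less: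
  fixes lam f :: "nat \<Rightarrow> real" and n :: "nat \<Rightarrow> nat"
  assumes lam_pos: "\<forall>i. lam i > 0" and f: "f \<in> cone lam n a b" and b_pos: "0 < b" and "a \<noteq> 0"
    and "1 \<le> j" and "0 \<le> T" and "T < sigma lam n f j"
  shows "T\<^sup>2 * jdag_bracket lam n a b j < (\<Sum>k=1..j. (sigma lam n f k)\<^sup>2 / (lam (n (k - 1)))\<^sup>2)"
proof -
  define L where "L k = lam (n (k - 1))" for k
  define w where "w k = b powi (2 * (int k - int j)) / a\<^sup>2" for k
  have L_pos: "0 < L k" for k
    unfolding L_def using lam_pos by simp
  have T_less: "T\<^sup>2 < (sigma lam n f j)\<^sup>2"
    using \<open>0 \<le> T\<close> \<open>T < sigma lam n f j\<close> by (simp add: power_strict_mono)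
  have "T\<^sup>2 * w k / (L k)\<^sup>2 \<le> (sigma lam n f k)\<^sup>2 / (L k)\<^sup>2" if "k \<in> {1..<j}" for k
  proof -
    have "0 \<le> w k"
      unfolding w_def using b_pos by (intro divide_nonneg_nonneg zero_le_power_int) simp_all
    then have "T\<^sup>2 * w k \<le> (sigma lam n f j)\<^sup>2 * w k"
      using T_less by (intro mult_right_mono) simp_all
    also have "\<dots> \<le> (sigma lam n f k)\<^sup>2"
      unfolding w_def using that \<open>a \<noteq> 0\<close> by (intro cone_sigma_lower[OF f b_pos]) auto
    finally show ?thesis by (rule divide_right_mono) simp
  qed
  then have "(\<Sum>k\<in>{1..<j}. T\<^sup>2 * w k / (L k)\<^sup>2) \<le> (\<Sum>k\<in>{1..<j}. (sigma lam n f k)\<^sup>2 / (L k)\<^sup>2)"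
    by (rule sum_mono)
  moreover have "T\<^sup>2 / (L j)\<^sup>2 < (sigma lam n f j)\<^sup>2 / (L j)\<^sup>2"
    using T_less L_pos[of j] by (simp add: divide_strict_right_mono)
  moreover have "T\<^sup>2 * jdag_bracket lam n a b j = (\<Sum>k\<in>{1..<j}. T\<^sup>2 * w k / (L k)\<^sup>2) + T\<^sup>2 / (L j)\<^sup>2"
    unfolding jdag_bracket_def w_def L_def by (simp add: distrib_left sum_distrib_left)
  ultimately have "T\<^sup>2 * jdag_bracket lam n a b j
      < (\<Sum>k\<in>{1..<j}. (sigma lam n f k)\<^sup>2 / (L k)\<^sup>2) + (sigma lam n f j)\<^sup>2 / (L j)\<^sup>2"
    by simp
  also have "\<dots> = (\<Sum>k=1..j. (sigma lam n f k)\<^sup>2 / (L k)\<^sup>2)"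
    using \<open>1 \<le> j\<close> by (simp add: atLeastLessThanSuc_atLeastAtMost[symmetric] sum.atLeastLessThan_Suc
        del: atLeastLessThanSuc_atLeastAtMost)
  finally show ?thesis unfolding L_def .
qed

lemma sigma_le_thr_if_jdag_cond:
  fixes lam f :: "nat \<Rightarrow> real" and n :: "nat \<Rightarrow> nat"
  assumes lam_pos: "\<forall>i. lam i > 0" and lam_dec: "decseq lam" and mono_n: "mono n"
    and b_pos: "0 < b" and b_lt1: "b < 1" and a_gt1: "1 < a"
    and f: "f \<in> cone lam n a b" and norm_f: "(\<Sum>i. (f i)\<^sup>2) \<le> \<rho>\<^sup>2"
    and e: "0 < \<epsilon>" and "1 \<le> j" and cond: "jdag_cond lam n a b \<epsilon> \<rho> j"
  shows "sigma lam n f j \<le> thr a b \<epsilon>"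
proof (rule ccontr)
  assume "\<not> ?thesis"
  then have "(thr a b \<epsilon>)\<^sup>2 * jdag_bracket lam n a b j
      < (\<Sum>k=1..j. (sigma lam n f k)\<^sup>2 / (lam (n (k - 1)))\<^sup>2)"
    using thr_pos[OF b_pos b_lt1 a_gt1 e] a_gt1 \<open>1 \<le> j\<close>
    by (intro sq_mult_jdag_bracket_less[OF lam_pos f b_pos]) auto
  also have "\<dots> \<le> (\<Sum>i\<in>{n 0..<n j}. (f i)\<^sup>2)"
    by (rule sum_sigma_sq_div_le[OF lam_pos lam_dec mono_n])
  also have "\<dots> \<le> (\<Sum>i. (f i)\<^sup>2)"
    using coneD(1)[OF f] unfolding inF_def by (rule sum_le_suminf) auto
  also have "\<dots> \<le> \<rho>\<^sup>2" by (fact norm_f)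
  also have "\<dots> \<le> \<epsilon>\<^sup>2 * ((1 - b\<^sup>2) / (a\<^sup>2 * b\<^sup>2) * jdag_bracket lam n a b j)"
    using cond e unfolding jdag_cond_iff by (simp add: divide_le_eq mult.commute)
  also have "\<dots> = (thr a b \<epsilon>)\<^sup>2 * jdag_bracket lam n a b j"
    unfolding thr_sq[OF b_pos b_lt1] by simp
  finally show False by simp
qed

lemma exists_jdag_cond:
  fixes lam :: "nat \<Rightarrow> real" and n :: "nat \<Rightarrow> nat"
  assumes lam_pos: "\<forall>i. lam i > 0" and lam_lim: "lam \<longlonglongrightarrow> 0" and n_mono: "strict_mono n"
    and b_pos: "0 < b" and b_lt1: "b < 1" and a_gt1: "1 < a" and e: "0 < \<epsilon>" and r: "0 < \<rho>"
  shows "\<exists>j\<ge>1. jdag_cond lam n a b \<epsilon> \<rho> j"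
proof -
  define C where "C = (1 - b\<^sup>2) / (a\<^sup>2 * b\<^sup>2)"
  have "0 < C"
    unfolding C_def using b_pos b_lt1 a_gt1 by (simp add: power_less_one_iff)
  have "(\<lambda>j. (lam (n j))\<^sup>2) \<longlonglongrightarrow> 0"
    using tendsto_power[OF LIMSEQ_subseq_LIMSEQ[OF lam_lim n_mono], of 2] by (simp add: o_def)
  moreover have "0 < \<epsilon>\<^sup>2 * C / \<rho>\<^sup>2" using e r \<open>0 < C\<close> by simp
  ultimately have "\<forall>\<^sub>F j in sequentially. (lam (n j))\<^sup>2 < \<epsilon>\<^sup>2 * C / \<rho>\<^sup>2"
    by (rule order_tendstoD(2))
  then obtain N where N: "(lam (n N))\<^sup>2 < \<epsilon>\<^sup>2 * C / \<rho>\<^sup>2"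
    unfolding eventually_sequentially by blast
  then have "(lam (n N))\<^sup>2 * \<rho>\<^sup>2 < \<epsilon>\<^sup>2 * C"
    using r by (simp add: pos_less_divide_eq)
  then have "\<rho>\<^sup>2 / \<epsilon>\<^sup>2 \<le> C * (1 / (lam (n N))\<^sup>2)"
    using e lam_pos[rule_format, of "n N"] by (simp add: pos_divide_le_eq pos_le_divide_eq mult_ac)
  also have "\<dots> \<le> C * jdag_bracket lam n a b (Suc N)"
    using jdag_bracket_ge[OF b_pos, of lam n "Suc N"] \<open>0 < C\<close> by (intro mult_left_mono) simp_all
  finally have "jdag_cond lam n a b \<epsilon> \<rho> (Suc N)"
    unfolding jdag_cond_iff C_def .
  then show ?thesis by (intro exI[of _ "Suc N"]) simp
qed

lemma cost_Atilde_le_if_jdag_cond: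
  fixes lam f :: "nat \<Rightarrow> real" and n :: "nat \<Rightarrow> nat"
  assumes lam_pos: "\<forall>i. lam i > 0" and lam_dec: "decseq lam" and mono_n: "mono n"
    and b_pos: "0 < b" and b_lt1: "b < 1" and a_gt1: "1 < a"
    and f: "f \<in> cone lam n a b" and norm_f: "l2norm f \<le> \<rho>" and e: "0 < \<epsilon>"
    and j: "1 \<le> j" and cond: "jdag_cond lam n a b \<epsilon> \<rho> j"
  shows "cost_Atilde lam n a b f \<epsilon> \<le> n j"
proof -
  have "sigma lam n f j \<le> thr a b \<epsilon>"
    using suminf_sq_le_if_l2norm_le[OF coneD(1)[OF f] norm_f] e j cond
    by (intro sigma_le_thr_if_jdag_cond[OF lam_pos lam_dec mono_n b_pos b_lt1 a_gt1 f])
  then have "jstop lam n a b f \<epsilon> \<le> j"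
    by (rule jstop_le[OF j])
  then show ?thesis
    using mono_n by (simp add: cost_Atilde_eq monoD)
qed

lemma cost_Atilde_uniform_bound:
  fixes lam :: "nat \<Rightarrow> real" and n :: "nat \<Rightarrow> nat"
  assumes lam_pos: "\<forall>i. lam i > 0" and lam_dec: "decseq lam" and lam_lim: "lam \<longlonglongrightarrow> 0"
    and n_mono: "strict_mono n" and b_pos: "0 < b" and b_lt1: "b < 1" and a_gt1: "1 < a"
    and e: "0 < \<epsilon>" and r: "0 < \<rho>"
  shows "\<exists>jd\<ge>1. (\<forall>f\<in>cone lam n a b. l2norm f \<le> \<rho> \<longrightarrow> cost_Atilde lam n a b f \<epsilon> \<le> n jd) \<and>
    (\<exists>j\<ge>1. jdag_cond lam n a b \<epsilon> \<rho> j) \<and> (\<forall>j\<ge>1. jdag_cond lam n a b \<epsilon> \<rho> j \<longrightarrow> jd \<le> j)"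
proof -
  define jd where "jd = (LEAST j. j \<ge> 1 \<and> jdag_cond lam n a b \<epsilon> \<rho> j)"
  have ex: "\<exists>j\<ge>1. jdag_cond lam n a b \<epsilon> \<rho> j"
    using exists_jdag_cond[OF lam_pos lam_lim n_mono b_pos b_lt1 a_gt1 e r] .
  then have "jd \<ge> 1 \<and> jdag_cond lam n a b \<epsilon> \<rho> jd"
    unfolding jd_def by (rule LeastI_ex)
  moreover have "\<forall>j\<ge>1. jdag_cond lam n a b \<epsilon> \<rho> j \<longrightarrow> jd \<le> j"
    unfolding jd_def by (auto intro: Least_le)
  ultimately show ?thesis
    using ex cost_Atilde_le_if_jdag_cond[OF lam_pos lam_dec strict_mono_mono[OF n_mono] b_pos b_lt1 a_gt1 _ _ e]
    by blast
qed

theorem theorem1: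
  fixes lam :: "nat \<Rightarrow> real" and n :: "nat \<Rightarrow> nat" and a b :: real
  assumes lam_pos: "\<forall>i. lam i > 0"
    and lam_dec: "decseq lam"
    and lam_lim: "lam \<longlonglongrightarrow> 0"
    and n_mono: "strict_mono n"
    and b_pos: "0 < b" and b_lt1: "b < 1" and a_gt1: "1 < a"
  shows
    "(\<forall>f\<in>cone lam n a b. \<forall>\<epsilon>>0.
        (\<exists>j\<ge>1. sigma lam n f j \<le> thr a b \<epsilon>) \<and>
        l2norm (\<lambda>i. Sop lam f i - Atilde lam n a b f \<epsilon> i) \<le> \<epsilon>)
   \<and> (\<forall>f\<in>cone lam n a b. \<forall>\<epsilon>>0.
        cost_Atilde lam n a b f \<epsilon> = n (LEAST j. j \<ge> 1 \<and> sigma lam n f j \<le> thr a b \<epsilon>))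
   \<and> (\<forall>\<epsilon>>0. \<forall>\<rho>>0. \<exists>jd\<ge>1.
        (\<forall>f\<in>cone lam n a b. l2norm f \<le> \<rho> \<longrightarrow> cost_Atilde lam n a b f \<epsilon> \<le> n jd) \<and>
        (\<exists>j\<ge>1. jdag_cond lam n a b \<epsilon> \<rho> j) \<and>
        (\<forall>j\<ge>1. jdag_cond lam n a b \<epsilon> \<rho> j \<longrightarrow> jd \<le> j))"
proof (intro conjI ballI allI impI)
  fix f \<epsilon> assume f: "f \<in> cone lam n a b" and e: "(\<epsilon>::real) > 0"
  show "\<exists>j\<ge>1. sigma lam n f j \<le> thr a b \<epsilon>"
    using exists_sigma_le[OF lam_pos lam_dec strict_mono_mono[OF n_mono] coneD(1)[OF f]
        thr_pos[OF b_pos b_lt1 a_gt1 e]] .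
  show "l2norm (\<lambda>i. Sop lam f i - Atilde lam n a b f \<epsilon> i) \<le> \<epsilon>"
    using Atilde_error_le[OF lam_pos lam_dec n_mono b_pos b_lt1 a_gt1 f e] .
next
  fix f \<epsilon>
  show "cost_Atilde lam n a b f \<epsilon> = n (LEAST j. j \<ge> 1 \<and> sigma lam n f j \<le> thr a b \<epsilon>)"
    using cost_Atilde_eq[OF strict_mono_mono[OF n_mono]] unfolding jstop_def .
qed (rule cost_Atilde_uniform_bound[OF lam_pos lam_dec lam_lim n_mono b_pos b_lt1 a_gt1])

end
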